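(* Let $a,a^{\dagger},b,b^{\dagger}$ be linear operators (with $a^{\dagger},b^{\dagger}$ the adjoints of $a,b$) satisfying $\ker a^{\dagger}=\{0\}=\ker b$ and $$[a^{\dagger}a,a^{\dagger}b]=\lambda a^{\dagger}b,\quad [bb^{\dagger},ba^{\dagger}]=\lambda' ba^{\dagger},\quad [a^{\dagger}b,b^{\dagger}a]=\mu a^{\dagger}a+\nu,\quad [ba^{\dagger},ab^{\dagger}]=\mu' aa^{\dagger}+\nu',$$ where $\lambda,\lambda',\nu,\nu'\in\mathbb R$, $\lambda\neq 0$, and $\mu,\mu'$ are constants. Then there exist $\alpha,\beta,\gamma,\delta\in\mathbb R$ such that $b^{\dagger}b=\alpha a^{\dagger}a+\gamma$ and $bb^{\dagger}=\beta aa^{\dagger}+\delta$.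
   Context: $[X,Y]=XY-YX$ denotes the commutator; all identities are understood as operator identities on a suitable common domain. *)

theory Defs
  imports Complex_Main
begin

class cvec = ab_group_add +
  fixes scaleC :: "complex \<Rightarrow> 'a \<Rightarrow> 'a" (infixr "*\<^sub>C" 75)
  assumes scaleC_add_right: "c *\<^sub>C (x + y) = c *\<^sub>C x + c *\<^sub>C y"
    and scaleC_add_left: "(c + d) *\<^sub>C x = c *\<^sub>C x + d *\<^sub>C x"
    and scaleC_scaleC: "c *\<^sub>C (d *\<^sub>C x) = (c * d) *\<^sub>C x"
    and scaleC_one: "1 *\<^sub>C x = x"

definition clin :: "('a::cvec \<Rightarrow> 'a) \<Rightarrow> bool" where
  "clin f \<longleftrightarrow> (\<forall>x y. f (x + y) = f x + f y) \<and> (\<forall>c x. f (c *\<^sub>C x) = c *\<^sub>C f x)"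

definition is_cinner :: "('a::cvec \<Rightarrow> 'a \<Rightarrow> complex) \<Rightarrow> bool" where
  "is_cinner ip \<longleftrightarrow>
     (\<forall>x y. ip x y = cnj (ip y x)) \<and>
     (\<forall>x y z. ip x (y + z) = ip x y + ip x z) \<and>
     (\<forall>c x y. ip x (c *\<^sub>C y) = c * ip x y) \<and>
     (\<forall>x. Im (ip x x) = 0 \<and> Re (ip x x) \<ge> 0) \<and>
     (\<forall>x. ip x x = 0 \<longrightarrow> x = 0)"

definition is_adjoint :: "('a::cvec \<Rightarrow> 'a \<Rightarrow> complex) \<Rightarrow> ('a \<Rightarrow> 'a) \<Rightarrow> ('a \<Rightarrow> 'a) \<Rightarrow> bool" where
  "is_adjoint ip a ad \<longleftrightarrow> (\<forall>x y. ip (a x) y = ip x (ad y))"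

definition opcomm :: "('a::cvec \<Rightarrow> 'a) \<Rightarrow> ('a \<Rightarrow> 'a) \<Rightarrow> ('a \<Rightarrow> 'a)" where
  "opcomm X Y = (\<lambda>x. X (Y x) - Y (X x))"

end

theory Submission
  imports Defs
begin

text \<open>
  Cancelling the injective outer factor \<open>a\<^sup>\<dagger>\<close> (resp. \<open>b\<close>) in the first two
  commutation relations shows that \<open>b\<close> intertwines \<open>a\<^sup>\<dagger>a + \<lambda>\<close> with \<open>aa\<^sup>\<dagger>\<close>
  and that \<open>a\<^sup>\<dagger>\<close> intertwines \<open>bb\<^sup>\<dagger> + \<lambda>'\<close> with \<open>b\<^sup>\<dagger>b\<close>; together with the
  adjoint relations this forces \<open>b\<^sup>\<dagger>b\<close> to commute with \<open>a\<^sup>\<dagger>a\<close> and \<open>bb\<^sup>\<dagger>\<close> with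
  \<open>aa\<^sup>\<dagger>\<close>. Expanding \<open>\<lambda> b\<^sup>\<dagger>b = b\<^sup>\<dagger>(aa\<^sup>\<dagger>b - ba\<^sup>\<dagger>a)\<close> with the third relation,
  all terms except \<open>a\<^sup>\<dagger>a\<close> and the identity cancel, and similarly for \<open>\<lambda> bb\<^sup>\<dagger>\<close>
  with the fourth. The coefficients are real because both sides are self-adjoint.
\<close>

global_interpretation scaleC: vector_space "scaleC :: complex \<Rightarrow> 'a \<Rightarrow> 'a::cvec"
  by unfold_locales (simp_all add: scaleC_add_right scaleC_add_left scaleC_scaleC scaleC_one)

lemma scaleC_solve:
  fixes y u v :: "'a::cvec"
  assumes "c \<noteq> 0" and "c *\<^sub>C y = d *\<^sub>C u + e *\<^sub>C v"
  shows "y = (d / c) *\<^sub>C u + (e / c) *\<^sub>C v"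
proof -
  have "y = inverse c *\<^sub>C (c *\<^sub>C y)" using assms(1) by simp
  then show ?thesis
    using assms(2) by (simp add: scaleC.scale_right_distrib divide_inverse_commute)
qed

lemma clin_add: "clin f \<Longrightarrow> f (x + y) = f x + f y"
  by (simp add: clin_def)

lemma clin_scaleC: "clin f \<Longrightarrow> f (c *\<^sub>C x) = c *\<^sub>C f x"
  by (simp add: clin_def)

lemma clin_diff:
  assumes "clin f"
  shows "f (x - y) = f x - f y"
  using clin_add[OF assms, of "x - y" y] by (simp add: eq_diff_eq)

lemma clin_inj:
  assumes "clin f" and "\<forall>x. f x = 0 \<longrightarrow> x = 0" and "f x = f y"
  shows "x = y"
  using assms clin_diff[OF assms(1), of x y] by (metis eq_iff_diff_eq_0)

lemma opcomm_cancel_left: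
  assumes T: "clin T" "\<forall>x. T x = 0 \<longrightarrow> x = 0"
    and comm: "opcomm (T \<circ> A) (T \<circ> B) = (\<lambda>x. c *\<^sub>C T (B x))"
  shows "A (T (B x)) - B (T (A x)) = c *\<^sub>C B x"
proof (rule clin_inj[OF T])
  show "T (A (T (B x)) - B (T (A x))) = T (c *\<^sub>C B x)"
    using fun_cong[OF comm, of x] by (simp add: opcomm_def clin_diff[OF T(1)] clin_scaleC[OF T(1)])
qed

lemma commute_of_intertwining:
  assumes T: "clin T"
    and XT: "\<And>x. X (T x) - T (Z x) = c *\<^sub>C T x"
    and SX: "\<And>x. S (X x) - Z (S x) = c *\<^sub>C S x"
  shows "X (T (S x)) = T (S (X x))"
proof -
  have "X (T (S x)) = T (Z (S x) + c *\<^sub>C S x)"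
    using XT[of "S x"] by (simp add: clin_add[OF T] clin_scaleC[OF T] diff_eq_eq add.commute)
  also have "\<dots> = T (S (X x))"
    using SX[of x] by (simp add: diff_eq_eq add.commute)
  finally show ?thesis .
qed

locale cinner_space =
  fixes ip :: "'v::cvec \<Rightarrow> 'v \<Rightarrow> complex"
  assumes is_cinner: "is_cinner ip"
begin

lemma cinner_commute: "ip x y = cnj (ip y x)"
  using is_cinner unfolding is_cinner_def by blast

lemma cinner_add_right: "ip x (y + z) = ip x y + ip x z"
  using is_cinner unfolding is_cinner_def by blast

lemma cinner_scaleC_right: "ip x (c *\<^sub>C y) = c * ip x y"
  using is_cinner unfolding is_cinner_def by blast

lemma cinner_eq_zero_iff: "ip x x = 0 \<longleftrightarrow> x = 0"
proof
  show "ip x x = 0 \<Longrightarrow> x = 0"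
    using is_cinner unfolding is_cinner_def by blast
  show "x = 0 \<Longrightarrow> ip x x = 0"
    using cinner_scaleC_right[of x 0 0] by simp
qed

lemma cinner_diff_right: "ip x (y - z) = ip x y - ip x z"
  using cinner_add_right[of x "y - z" z] by (simp add: eq_diff_eq)

lemma cinner_add_left: "ip (x + y) z = ip x z + ip y z"
  by (metis cinner_add_right cinner_commute complex_cnj_add)

lemma cinner_diff_left: "ip (x - y) z = ip x z - ip y z"
  by (metis cinner_diff_right cinner_commute complex_cnj_diff)

lemma cinner_scaleC_left: "ip (c *\<^sub>C x) y = cnj c * ip x y"
  by (metis cinner_scaleC_right cinner_commute complex_cnj_mult)

lemma cinner_eqI:
  assumes "\<And>z. ip z x = ip z y"
  shows "x = y"
  using assms[of "x - y"] cinner_eq_zero_iff[of "x - y"] by (simp add: cinner_diff_right)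

lemma is_adjoint_sym: "is_adjoint ip a ad \<Longrightarrow> is_adjoint ip ad a"
  unfolding is_adjoint_def by (metis cinner_commute)

lemma is_adjoint_comp:
  "is_adjoint ip A A' \<Longrightarrow> is_adjoint ip B B' \<Longrightarrow> is_adjoint ip (\<lambda>x. A (B x)) (\<lambda>y. B' (A' y))"
  unfolding is_adjoint_def by simp

lemma adjoint_relation:
  assumes "is_adjoint ip X X'" "is_adjoint ip Y Y'" "is_adjoint ip Z Z'"
    and rel: "\<forall>x. X x - Y x = complex_of_real r *\<^sub>C Z x"
  shows "X' y - Y' y = complex_of_real r *\<^sub>C Z' y"
proof (rule cinner_eqI)
  fix z
  have "ip z (X' y - Y' y) = ip (X z - Y z) y"
    using assms(1,2) by (simp add: is_adjoint_def cinner_diff_right cinner_diff_left)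
  also have "\<dots> = ip z (complex_of_real r *\<^sub>C Z' y)"
    using assms(3) rel by (simp add: is_adjoint_def cinner_scaleC_left cinner_scaleC_right)
  finally show "ip z (X' y - Y' y) = ip z (complex_of_real r *\<^sub>C Z' y)" .
qed

text \<open>
  Comparing \<open>T = \<alpha> S + \<gamma>\<close> with its adjoint \<open>T = cnj \<alpha> S + cnj \<gamma>\<close> shows
  \<open>Im \<alpha> S + Im \<gamma> = 0\<close>, so only the real parts of the coefficients remain.
\<close>

lemma selfadjoint_affine_real:
  assumes T: "\<forall>x. T x = \<alpha> *\<^sub>C S x + \<gamma> *\<^sub>C x"
    and "is_adjoint ip T T" and "is_adjoint ip S S"
  shows "\<exists>p q :: real. \<forall>x. T x = complex_of_real p *\<^sub>C S x + complex_of_real q *\<^sub>C x"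
proof -
  define W where "W x = complex_of_real (Im \<alpha>) *\<^sub>C S x + complex_of_real (Im \<gamma>) *\<^sub>C x" for x
  have im_part: "c - cnj c = 2 * \<i> * complex_of_real (Im c)" for c
    by (simp add: complex_eq_iff)
  have "ip (W x) z = 0" for x z
  proof -
    have "cnj \<alpha> * ip (S x) z + cnj \<gamma> * ip x z = \<alpha> * ip (S x) z + \<gamma> * ip x z"
      using assms unfolding is_adjoint_def
      by (metis cinner_add_left cinner_add_right cinner_scaleC_left cinner_scaleC_right)
    then have "(\<alpha> - cnj \<alpha>) * ip (S x) z + (\<gamma> - cnj \<gamma>) * ip x z = 0"
      by (simp add: algebra_simps)
    then have "2 * \<i> * ip (W x) z = 0"
      unfolding im_part W_def by (simp add: cinner_add_left cinner_scaleC_left algebra_simps)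
    then show ?thesis by simp
  qed
  then have W0: "W x = 0" for x
    using cinner_eq_zero_iff by blast
  have split: "c *\<^sub>C v = complex_of_real (Re c) *\<^sub>C v + \<i> *\<^sub>C (complex_of_real (Im c) *\<^sub>C v)"
    for c and v :: 'v
    by (simp flip: scaleC.scale_left_distrib) (simp add: complex_eq_iff)
  have "T x = complex_of_real (Re \<alpha>) *\<^sub>C S x + complex_of_real (Re \<gamma>) *\<^sub>C x + \<i> *\<^sub>C W x" for x
    unfolding T[rule_format] split[of \<alpha>] split[of \<gamma>] W_def by (simp add: algebra_simps)
  then show ?thesis
    using W0 by auto
qed

end

locale adjoint_pairs = cinner_space ip
  for ip :: "'v::cvec \<Rightarrow> 'v \<Rightarrow> complex" +
  fixes a ad b bd :: "'v \<Rightarrow> 'v"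
  assumes clin: "clin a" "clin ad" "clin b" "clin bd"
    and adjoint: "is_adjoint ip a ad" "is_adjoint ip b bd"
begin

lemma adjoint_converse: "is_adjoint ip ad a" "is_adjoint ip bd b"
  using adjoint by (simp_all add: is_adjoint_sym)

lemma adjoint_triple:
  "is_adjoint ip (\<lambda>x. a (ad (b x))) (\<lambda>x. bd (a (ad x)))"
  "is_adjoint ip (\<lambda>x. b (ad (a x))) (\<lambda>x. ad (a (bd x)))"
  "is_adjoint ip (\<lambda>x. bd (b (ad x))) (\<lambda>x. a (bd (b x)))"
  "is_adjoint ip (\<lambda>x. ad (b (bd x))) (\<lambda>x. b (bd (a x)))"
  using adjoint adjoint_converse by (simp_all add: is_adjoint_def)

lemma selfadjoint_products:
  "is_adjoint ip (\<lambda>x. bd (b x)) (\<lambda>x. bd (b x))" "is_adjoint ip (\<lambda>x. ad (a x)) (\<lambda>x. ad (a x))"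
  "is_adjoint ip (\<lambda>x. b (bd x)) (\<lambda>x. b (bd x))" "is_adjoint ip (\<lambda>x. a (ad x)) (\<lambda>x. a (ad x))"
  using adjoint adjoint_converse by (simp_all add: is_adjoint_comp)

lemma bd_intertwining:
  assumes "\<forall>x. a (ad (b x)) - b (ad (a x)) = complex_of_real lam *\<^sub>C b x"
  shows "bd (a (ad x)) - ad (a (bd x)) = complex_of_real lam *\<^sub>C bd x"
  by (rule adjoint_relation[OF adjoint_triple(1,2) adjoint(2) assms])

lemma a_intertwining:
  assumes "\<forall>x. bd (b (ad x)) - ad (b (bd x)) = complex_of_real lam' *\<^sub>C ad x"
  shows "a (bd (b x)) - b (bd (a x)) = complex_of_real lam' *\<^sub>C a x"
  by (rule adjoint_relation[OF adjoint_triple(3,4) adjoint_converse(1) assms])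

lemma bd_b_affine:
  assumes "lam \<noteq> 0"
    and b_intertw: "\<forall>x. a (ad (b x)) - b (ad (a x)) = complex_of_real lam *\<^sub>C b x"
    and ad_intertw: "\<forall>x. bd (b (ad x)) - ad (b (bd x)) = complex_of_real lam' *\<^sub>C ad x"
    and comm: "opcomm (ad \<circ> b) (bd \<circ> a) = (\<lambda>x. mu *\<^sub>C ad (a x) + complex_of_real nu *\<^sub>C x)"
  shows "bd (b x) = (- (complex_of_real lam' + mu) / complex_of_real lam) *\<^sub>C ad (a x)
      + (- complex_of_real nu / complex_of_real lam) *\<^sub>C x"
proof (rule scaleC_solve)
  note a_intertw = a_intertwining[OF ad_intertw]
  have "complex_of_real lam *\<^sub>C bd (b x) = bd (a (ad (b x))) - bd (b (ad (a x)))"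
    using arg_cong[OF b_intertw[rule_format, of x], of bd]
    by (simp add: clin_diff[OF clin(4)] clin_scaleC[OF clin(4)])
  also have "bd (a (ad (b x))) = ad (b (bd (a x))) - mu *\<^sub>C ad (a x) - complex_of_real nu *\<^sub>C x"
    using fun_cong[OF comm, of x] by (simp add: opcomm_def algebra_simps)
  also have "ad (b (bd (a x))) = ad (a (bd (b x))) - complex_of_real lam' *\<^sub>C ad (a x)"
    using arg_cong[OF a_intertw[of x], of ad]
    by (simp add: clin_diff[OF clin(2)] clin_scaleC[OF clin(2)] algebra_simps)
  also have "ad (a (bd (b x))) = bd (b (ad (a x)))"
    using commute_of_intertwining[of ad "\<lambda>x. bd (b x)" "\<lambda>x. b (bd x)" _ a,
          OF clin(2) ad_intertw[rule_format] a_intertw] by simp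
  finally show "complex_of_real lam *\<^sub>C bd (b x)
      = (- (complex_of_real lam' + mu)) *\<^sub>C ad (a x) + (- complex_of_real nu) *\<^sub>C x"
    by (simp add: algebra_simps)
qed (use assms(1) in simp)

lemma b_bd_affine:
  assumes "lam \<noteq> 0"
    and b_intertw: "\<forall>x. a (ad (b x)) - b (ad (a x)) = complex_of_real lam *\<^sub>C b x"
    and ad_intertw: "\<forall>x. bd (b (ad x)) - ad (b (bd x)) = complex_of_real lam' *\<^sub>C ad x"
    and comm: "opcomm (b \<circ> ad) (a \<circ> bd) = (\<lambda>x. mu' *\<^sub>C a (ad x) + complex_of_real nu' *\<^sub>C x)"
  shows "b (bd x) = (- (complex_of_real lam' + mu') / complex_of_real lam) *\<^sub>C a (ad x)
      + (- complex_of_real nu' / complex_of_real lam) *\<^sub>C x"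
proof (rule scaleC_solve)
  have "complex_of_real lam *\<^sub>C b (bd x) = a (ad (b (bd x))) - b (ad (a (bd x)))"
    using b_intertw by simp
  also have "b (ad (a (bd x))) = a (bd (b (ad x))) + mu' *\<^sub>C a (ad x) + complex_of_real nu' *\<^sub>C x"
    using fun_cong[OF comm, of x] by (simp add: opcomm_def algebra_simps)
  also have "a (bd (b (ad x))) = b (bd (a (ad x))) + complex_of_real lam' *\<^sub>C a (ad x)"
    using a_intertwining[OF ad_intertw, of "ad x"] by (simp add: algebra_simps)
  also have "a (ad (b (bd x))) = b (bd (a (ad x)))"
    using commute_of_intertwining[of b "\<lambda>x. a (ad x)" "\<lambda>x. ad (a x)" _ bd,
          OF clin(3) b_intertw[rule_format] bd_intertwining[OF b_intertw]] by simp
  finally show "complex_of_real lam *\<^sub>C b (bd x)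
      = (- (complex_of_real lam' + mu')) *\<^sub>C a (ad x) + (- complex_of_real nu') *\<^sub>C x"
    by (simp add: algebra_simps)
qed (use assms(1) in simp)

end

theorem theorem2:
  fixes ip :: "'v::cvec \<Rightarrow> 'v \<Rightarrow> complex"
    and a ad b bd :: "'v \<Rightarrow> 'v"
    and lam lam' nu nu' :: real and mu mu' :: complex
  assumes "is_cinner ip"
    and "clin a" and "clin ad" and "clin b" and "clin bd"
    and "is_adjoint ip a ad" and "is_adjoint ip b bd"
    and "\<forall>x. ad x = 0 \<longrightarrow> x = 0"
    and "\<forall>x. b x = 0 \<longrightarrow> x = 0"
    and "lam \<noteq> 0"
    and "opcomm (ad \<circ> a) (ad \<circ> b) = (\<lambda>x. complex_of_real lam *\<^sub>C ad (b x))"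
    and "opcomm (b \<circ> bd) (b \<circ> ad) = (\<lambda>x. complex_of_real lam' *\<^sub>C b (ad x))"
    and "opcomm (ad \<circ> b) (bd \<circ> a) = (\<lambda>x. mu *\<^sub>C ad (a x) + complex_of_real nu *\<^sub>C x)"
    and "opcomm (b \<circ> ad) (a \<circ> bd) = (\<lambda>x. mu' *\<^sub>C a (ad x) + complex_of_real nu' *\<^sub>C x)"
  shows "\<exists>\<alpha> \<beta> \<gamma> \<delta> :: real.
           (\<forall>x. bd (b x) = complex_of_real \<alpha> *\<^sub>C ad (a x) + complex_of_real \<gamma> *\<^sub>C x) \<and>
           (\<forall>x. b (bd x) = complex_of_real \<beta> *\<^sub>C a (ad x) + complex_of_real \<delta> *\<^sub>C x)"
proof -
  interpret adjoint_pairs ip a ad b bd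
    using assms(1-7) by unfold_locales
  have b_intertw: "\<forall>x. a (ad (b x)) - b (ad (a x)) = complex_of_real lam *\<^sub>C b x"
    using opcomm_cancel_left[OF assms(3,8,11)] by blast
  have ad_intertw: "\<forall>x. bd (b (ad x)) - ad (b (bd x)) = complex_of_real lam' *\<^sub>C ad x"
    using opcomm_cancel_left[OF assms(4,9,12)] by blast
  obtain \<alpha> \<gamma> :: real
    where "\<forall>x. bd (b x) = complex_of_real \<alpha> *\<^sub>C ad (a x) + complex_of_real \<gamma> *\<^sub>C x"
    using selfadjoint_affine_real[OF _ selfadjoint_products(1,2)]
      bd_b_affine[OF assms(10) b_intertw ad_intertw assms(13)] by blast
  moreover obtain \<beta> \<delta> :: real
    where "\<forall>x. b (bd x) = complex_of_real \<beta> *\<^sub>C a (ad x) + complex_of_real \<delta> *\<^sub>C x"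
    using selfadjoint_affine_real[OF _ selfadjoint_products(3,4)]
      b_bd_affine[OF assms(10) b_intertw ad_intertw assms(14)] by blast
  ultimately show ?thesis by blast
qed

end
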